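(* For every context $E$ and $\lambda\mu\mathrm{T}$-terms $r,s$ and $n\in\mathbb{N}$: (1) if $E[r]\in\mathrm{SN}_A$ and $s\in\mathrm{SN}_A$, then $E[\mathsf{nrec}\ r\ s\ 0]\in\mathrm{SN}_A$; (2) if $E[s\ \underline{n}\ (\mathsf{nrec}\ r\ s\ \underline{n})]\in\mathrm{SN}_A$, then $E[\mathsf{nrec}\ r\ s\ (\mathsf{S}\,\underline{n})]\in\mathrm{SN}_A$.
   Context: The calculus $\lambda\mu\mathrm{T}$ (raw terms). Types: $\rho,\sigma,\tau ::= \mathbb{N} \mid \sigma\to\tau$. Over infinite sets of $\lambda$-variables $x,y,\dots$ and $\mu$-variables $\alpha,\beta,\gamma,\dots$, terms and commands are mutually defined by $t,r,s ::= x \mid \lambda x{:}\rho.r \mid t\,s \mid \mu\alpha{:}\rho.c \mid 0 \mid \mathsf{S}\,t \mid \mathsf{nrec}_\rho\ r\ s\ t$ and $c ::= [\alpha]t$. Terms are considered modulo renaming of bound variables; $t[x:=r]$ is capture-avoiding substitution. Numerals: $\underline{n} := \mathsf{S}^n 0$. Contexts: $E ::= \Box \mid E\,t \mid \mathsf{S}\,E \mid \mathsf{nrec}\ r\ s\ E$; $E[u]$ fills the hole with $u$. Structural substitution $t[\alpha:=\beta E]$ is homomorphic on all constructs (capture-avoiding) except $([\alpha]u)[\alpha:=\beta E] := [\beta]E[u[\alpha:=\beta E]]$ (and $([\gamma]u)[\alpha:=\beta E]:=[\gamma](u[\alpha:=\beta E])$ for $\gamma\neq\alpha$). $\to_A$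 is the compatible closure (on terms and commands) of: $(\lambda x.t)r\to t[x:=r]$; $\mathsf{S}(\mu\alpha.c)\to\mu\alpha.c[\alpha:=\alpha(\mathsf{S}\,\Box)]$; $(\mu\alpha.c)s\to\mu\alpha.c[\alpha:=\alpha(\Box\,s)]$; $\mathsf{nrec}\ r\ s\ 0\to r$; $\mathsf{nrec}\ r\ s\ (\mathsf{S}\,\underline{n})\to s\ \underline{n}\ (\mathsf{nrec}\ r\ s\ \underline{n})$; $\mathsf{nrec}\ r\ s\ (\mu\alpha.c)\to\mu\alpha.c[\alpha:=\alpha(\mathsf{nrec}\ r\ s\ \Box)]$. $\mathrm{SN}_A$ is defined inductively: $t\in\mathrm{SN}_A$ whenever every $t'$ with $t\to_A t'$ is in $\mathrm{SN}_A$. *)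

theory Defs
  imports Main
begin

text \<open>Terms modulo renaming of bound variables are represented with de Bruijn
indices, with two separate index spaces: one for lambda-variables (Var i) and one
for mu-variables (the index in a command Cmd i t).  Type annotations are kept
as in the paper but play no role in reduction.\<close>

datatype ty = N | Arr ty ty

datatype trm =
    Var nat
  | Lam ty trm
  | App trm trm
  | Mu ty cmd
  | Zero
  | Succ trm
  | Nrec ty trm trm trm
and cmd = Cmd nat trm

datatype ctx =
    Hole
  | CApp ctx trm
  | CSucc ctx
  | CNrec ty trm trm ctx

fun fill :: "ctx \<Rightarrow> trm \<Rightarrow> trm" where
  "fill Hole u = u"
| "fill (CApp E t) u = App (fill E u) t"
| "fill (CSucc E) u = Succ (fill E u)"
| "fill (CNrec \<rho> r s E) u = Nrec \<rho> r s (fill E u)"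

definition num :: "nat \<Rightarrow> trm" where
  "num n = (Succ ^^ n) Zero"

fun liftL :: "nat \<Rightarrow> trm \<Rightarrow> trm" and liftLC :: "nat \<Rightarrow> cmd \<Rightarrow> cmd" where
  "liftL k (Var i) = (if i < k then Var i else Var (Suc i))"
| "liftL k (Lam \<rho> t) = Lam \<rho> (liftL (Suc k) t)"
| "liftL k (App t u) = App (liftL k t) (liftL k u)"
| "liftL k (Mu \<rho> c) = Mu \<rho> (liftLC k c)"
| "liftL k Zero = Zero"
| "liftL k (Succ t) = Succ (liftL k t)"
| "liftL k (Nrec \<rho> r s t) = Nrec \<rho> (liftL k r) (liftL k s) (liftL k t)"
| "liftLC k (Cmd a t) = Cmd a (liftL k t)"

fun liftM :: "nat \<Rightarrow> trm \<Rightarrow> trm" and liftMC :: "nat \<Rightarrow> cmd \<Rightarrow> cmd" where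
  "liftM k (Var i) = Var i"
| "liftM k (Lam \<rho> t) = Lam \<rho> (liftM k t)"
| "liftM k (App t u) = App (liftM k t) (liftM k u)"
| "liftM k (Mu \<rho> c) = Mu \<rho> (liftMC (Suc k) c)"
| "liftM k Zero = Zero"
| "liftM k (Succ t) = Succ (liftM k t)"
| "liftM k (Nrec \<rho> r s t) = Nrec \<rho> (liftM k r) (liftM k s) (liftM k t)"
| "liftMC k (Cmd a t) = Cmd (if a < k then a else Suc a) (liftM k t)"

fun liftLctx :: "nat \<Rightarrow> ctx \<Rightarrow> ctx" where
  "liftLctx k Hole = Hole"
| "liftLctx k (CApp E t) = CApp (liftLctx k E) (liftL k t)"
| "liftLctx k (CSucc E) = CSucc (liftLctx k E)"
| "liftLctx k (CNrec \<rho> r s E) = CNrec \<rho> (liftL k r) (liftL k s) (liftLctx k E)"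

fun liftMctx :: "nat \<Rightarrow> ctx \<Rightarrow> ctx" where
  "liftMctx k Hole = Hole"
| "liftMctx k (CApp E t) = CApp (liftMctx k E) (liftM k t)"
| "liftMctx k (CSucc E) = CSucc (liftMctx k E)"
| "liftMctx k (CNrec \<rho> r s E) = CNrec \<rho> (liftM k r) (liftM k s) (liftMctx k E)"

text \<open>Capture-avoiding substitution t[x:=r] of r for the lambda-variable with
index k (free variables above k are decremented, as the binder disappears).\<close>
fun substL :: "nat \<Rightarrow> trm \<Rightarrow> trm \<Rightarrow> trm" and substLC :: "nat \<Rightarrow> trm \<Rightarrow> cmd \<Rightarrow> cmd" where
  "substL k r (Var i) = (if i < k then Var i else if i = k then r else Var (i - 1))"
| "substL k r (Lam \<rho> t) = Lam \<rho> (substL (Suc k) (liftL 0 r) t)"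
| "substL k r (App t u) = App (substL k r t) (substL k r u)"
| "substL k r (Mu \<rho> c) = Mu \<rho> (substLC k (liftM 0 r) c)"
| "substL k r Zero = Zero"
| "substL k r (Succ t) = Succ (substL k r t)"
| "substL k r (Nrec \<rho> a b t) = Nrec \<rho> (substL k r a) (substL k r b) (substL k r t)"
| "substLC k r (Cmd a t) = Cmd a (substL k r t)"

text \<open>Structural substitution t[alpha:=alpha E] for the mu-variable with index k
(the only instance, beta = alpha, used by the reduction rules):
[alpha]u becomes [alpha]E[u[alpha:=alpha E]], homomorphic elsewhere.\<close>
fun ssubst :: "nat \<Rightarrow> ctx \<Rightarrow> trm \<Rightarrow> trm" and ssubstC :: "nat \<Rightarrow> ctx \<Rightarrow> cmd \<Rightarrow> cmd" where
  "ssubst k E (Var i) = Var i"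
| "ssubst k E (Lam \<rho> t) = Lam \<rho> (ssubst k (liftLctx 0 E) t)"
| "ssubst k E (App t u) = App (ssubst k E t) (ssubst k E u)"
| "ssubst k E (Mu \<rho> c) = Mu \<rho> (ssubstC (Suc k) (liftMctx 0 E) c)"
| "ssubst k E Zero = Zero"
| "ssubst k E (Succ t) = Succ (ssubst k E t)"
| "ssubst k E (Nrec \<rho> a b t) = Nrec \<rho> (ssubst k E a) (ssubst k E b) (ssubst k E t)"
| "ssubstC k E (Cmd a t) =
     (if a = k then Cmd a (fill E (ssubst k E t)) else Cmd a (ssubst k E t))"

text \<open>Result type annotation of the mu-abstraction after (mu alpha:rho.c) s reduces;
purely decorative.\<close>
fun cod :: "ty \<Rightarrow> ty" where
  "cod (Arr a b) = b"
| "cod N = N"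

inductive stepA :: "trm \<Rightarrow> trm \<Rightarrow> bool" and stepAC :: "cmd \<Rightarrow> cmd \<Rightarrow> bool" where
  beta: "stepA (App (Lam \<rho> t) r) (substL 0 r t)"
| muS: "stepA (Succ (Mu \<rho> c)) (Mu N (ssubstC 0 (CSucc Hole) c))"
| muApp: "stepA (App (Mu \<rho> c) s) (Mu (cod \<rho>) (ssubstC 0 (CApp Hole (liftM 0 s)) c))"
| nrec0: "stepA (Nrec \<rho> r s Zero) r"
| nrecS: "stepA (Nrec \<rho> r s (Succ (num n))) (App (App s (num n)) (Nrec \<rho> r s (num n)))"
| nrecMu: "stepA (Nrec \<rho> r s (Mu \<sigma> c))
            (Mu \<rho> (ssubstC 0 (CNrec \<rho> (liftM 0 r) (liftM 0 s) Hole) c))"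
| cLam: "stepA t t' \<Longrightarrow> stepA (Lam \<rho> t) (Lam \<rho> t')"
| cAppL: "stepA t t' \<Longrightarrow> stepA (App t u) (App t' u)"
| cAppR: "stepA u u' \<Longrightarrow> stepA (App t u) (App t u')"
| cMu: "stepAC c c' \<Longrightarrow> stepA (Mu \<rho> c) (Mu \<rho> c')"
| cSucc: "stepA t t' \<Longrightarrow> stepA (Succ t) (Succ t')"
| cNrec1: "stepA r r' \<Longrightarrow> stepA (Nrec \<rho> r s t) (Nrec \<rho> r' s t)"
| cNrec2: "stepA s s' \<Longrightarrow> stepA (Nrec \<rho> r s t) (Nrec \<rho> r s' t)"
| cNrec3: "stepA t t' \<Longrightarrow> stepA (Nrec \<rho> r s t) (Nrec \<rho> r s t')"
| cCmd: "stepA t t' \<Longrightarrow> stepAC (Cmd a t) (Cmd a t')"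

inductive SNA :: "trm \<Rightarrow> bool" where
  "(\<And>t'. stepA t t' \<Longrightarrow> SNA t') \<Longrightarrow> SNA t"

end

theory Submission
  imports Defs
begin

text \<open>
  Both parts of the theorem are "head expansion" properties: E[nrec r s 0] and
  E[nrec r s (S n)] reduce in one step to E[r] and E[s n (nrec r s n)], and we show
  that strong normalisation transfers back along these head steps.

  The key structural fact is that an inert term u (a variable, an application or a
  recursor, i.e. neither an abstraction, a mu-abstraction nor a numeral) cannot
  interact with a surrounding evaluation context E: every reduct of E[u] either
  reduces u in place or is E'[u] for a context E' with E[v] \<rightarrow> E'[v] for all v.
  With this decomposition, part (1) follows by nested induction on the strong
  normalisation of s and of E[r], and part (2) by induction along the transitive
  reduction of E[s n (nrec r s n)]: a step inside s is simulated there by two steps,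
  one in each copy of s.
\<close>

lemma num_0 [simp]: "num 0 = Zero"
  and num_Suc [simp]: "num (Suc n) = Succ (num n)"
  by (simp_all add: num_def)

lemma num_inj: "num m = num n \<Longrightarrow> m = n"
  by (induction m arbitrary: n) (case_tac n; simp)+

lemma num_normal: "\<not> stepA (num n) t"
proof (induction n arbitrary: t)
  case 0
  show ?case by (auto elim: stepA.cases)
next
  case (Suc n)
  have not_mu: "num n \<noteq> Mu \<sigma> c" for \<sigma> c by (cases n) simp_all
  show ?case
  proof
    assume "stepA (num (Suc n)) t"
    then show False
      by (cases rule: stepA.cases) (use Suc not_mu in auto)
  qed
qed

text \<open>Inert terms are those whose head cannot take part in a redex formed with a
  surrounding context.\<close>
fun inert :: "trm \<Rightarrow> bool" where
  "inert (Var i) = True"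
| "inert (App t u) = True"
| "inert (Nrec \<rho> r s t) = True"
| "inert _ = False"

lemma inert_Nrec: "inert (Nrec \<rho> r s t)"
  by simp

lemma fill_inert_not_value:
  assumes "inert u"
  shows "fill E u \<noteq> Lam \<rho> t" "fill E u \<noteq> Mu \<rho> c" "fill E u \<noteq> num m"
    and "fill E u \<noteq> Zero"
proof -
  show "fill E u \<noteq> Lam \<rho> t" "fill E u \<noteq> Mu \<rho> c" "fill E u \<noteq> Zero"
    using assms by (cases E; cases u; simp)+
  show "fill E u \<noteq> num m"
    using assms by (induction E arbitrary: m) (case_tac m; cases u; simp)+
qed

definition ctx_step :: "ctx \<Rightarrow> ctx \<Rightarrow> bool" where
  "ctx_step E E' \<longleftrightarrow> (\<forall>v. stepA (fill E v) (fill E' v))"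

lemma fill_step: "stepA u u' \<Longrightarrow> stepA (fill E u) (fill E u')"
  by (induction E) (auto intro: stepA_stepAC.intros)

lemma ctx_step_CApp: "ctx_step E E' \<Longrightarrow> ctx_step (CApp E t) (CApp E' t)"
  and ctx_step_CSucc: "ctx_step E E' \<Longrightarrow> ctx_step (CSucc E) (CSucc E')"
  and ctx_step_CNrec: "ctx_step E E' \<Longrightarrow> ctx_step (CNrec \<rho> r s E) (CNrec \<rho> r s E')"
  by (auto simp: ctx_step_def intro: stepA_stepAC.intros)

text \<open>The decomposition below is stable under enlarging the context by one layer W,
  which acts on filled terms as F.\<close>
lemma context_decomposition_lift:
  assumes "(\<exists>u'. stepA u u' \<and> x = fill E u') \<or> (\<exists>E'. x = fill E' u \<and> ctx_step E E')"
    and "\<And>E v. fill (W E) v = F (fill E v)"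
    and "\<And>E'. ctx_step E E' \<Longrightarrow> ctx_step (W E) (W E')"
  shows "(\<exists>u'. stepA u u' \<and> F x = fill (W E) u') \<or> (\<exists>E'. F x = fill E' u \<and> ctx_step (W E) E')"
  using assms(1)
proof (elim disjE exE conjE)
  fix u' assume "stepA u u'" "x = fill E u'"
  then show ?thesis using assms(2) by auto
next
  fix E' assume "x = fill E' u" "ctx_step E E'"
  then show ?thesis
    by (intro disjI2 exI[of _ "W E'"]) (simp add: assms(2,3))
qed

lemma fill_inert_step:
  assumes "inert u" and "stepA (fill E u) t'"
  shows "(\<exists>u'. stepA u u' \<and> t' = fill E u') \<or> (\<exists>E'. t' = fill E' u \<and> ctx_step E E')"
  using assms(2)
proof (induction E arbitrary: t')
  case Hole
  then show ?case by simp
next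
  case (CApp E t)
  from CApp.prems show ?case
  proof (cases rule: stepA.cases)
    case (cAppL x x')
    then have "stepA (fill E u) x'" by simp
    from context_decomposition_lift[OF CApp.IH[OF this], where W="\<lambda>E. CApp E t" and F="\<lambda>v. App v t"]
    show ?thesis using cAppL by (simp add: ctx_step_CApp)
  next
    case (cAppR t0 t')
    then show ?thesis
      by (intro disjI2 exI[of _ "CApp E t'"]) (auto simp: ctx_step_def intro: stepA_stepAC.intros)
  qed (use fill_inert_not_value[OF assms(1)] in auto)
next
  case (CSucc E)
  from CSucc.prems show ?case
  proof (cases rule: stepA.cases)
    case (cSucc x x')
    then have "stepA (fill E u) x'" by simp
    from context_decomposition_lift[OF CSucc.IH[OF this], where W="CSucc" and F="Succ"]
    show ?thesis using cSucc by (simp add: ctx_step_CSucc)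
  qed (use fill_inert_not_value[OF assms(1)] in auto)
next
  case (CNrec \<sigma> a b E)
  from CNrec.prems show ?case
  proof (cases rule: stepA.cases)
    case (nrecS _ _ _ n)
    then show ?thesis using fill_inert_not_value(3)[OF assms(1), of E "Suc n"] by simp
  next
    case (cNrec3 x x')
    then have "stepA (fill E u) x'" by simp
    from context_decomposition_lift[OF CNrec.IH[OF this], where W="CNrec \<sigma> a b" and F="Nrec \<sigma> a b"]
    show ?thesis using cNrec3 by (simp add: ctx_step_CNrec)
  next
    case (cNrec1 a0 a')
    then show ?thesis
      by (intro disjI2 exI[of _ "CNrec \<sigma> a' b E"]) (auto simp: ctx_step_def intro: stepA_stepAC.intros)
  next
    case (cNrec2 b0 b')
    then show ?thesis
      by (intro disjI2 exI[of _ "CNrec \<sigma> a b' E"]) (auto simp: ctx_step_def intro: stepA_stepAC.intros)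
  qed (use fill_inert_not_value[OF assms(1)] in auto)
qed

lemma SNA_tranclp_induct [consumes 1, case_names step]:
  assumes "SNA x"
    and step: "\<And>x. SNA x \<Longrightarrow> (\<And>y. stepA\<^sup>+\<^sup>+ x y \<Longrightarrow> P y) \<Longrightarrow> P x"
  shows "P x"
proof -
  have "\<forall>y. stepA\<^sup>*\<^sup>* x y \<longrightarrow> P y" using assms(1)
  proof (induction rule: SNA.induct)
    case (1 x)
    have reducts: "P z" if "stepA\<^sup>+\<^sup>+ x z" for z
      using that 1(2) by (blast dest: tranclpD)
    have "P x" by (rule step[OF SNA.intros[OF 1(1)] reducts])
    then show ?case
      using 1(2) by (blast elim: converse_rtranclpE)
  qed
  then show ?thesis by blast
qed

text \<open>A reduct of E[nrec r s 0] is either E[r] itself, or obtained by reducing r or E,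
  which the inner hypothesis (on E[r]) covers, or by reducing s, which the outer
  hypothesis (on s) covers.\<close>
lemma SNA_nrec_zero:
  "SNA s \<Longrightarrow> SNA (fill E r) \<Longrightarrow> SNA (fill E (Nrec \<rho> r s Zero))"
proof (induction s arbitrary: E r rule: SNA.induct)
  case (1 s)
  note IH_s = 1(2)
  from 1(3) show ?case
  proof (induction "fill E r" arbitrary: E r rule: SNA.induct)
    case 1
    note IH_Er = 1(2)
    show ?case
    proof (rule SNA.intros)
      fix t' assume "stepA (fill E (Nrec \<rho> r s Zero)) t'"
      from fill_inert_step[OF inert_Nrec this] show "SNA t'"
      proof (elim disjE exE conjE)
        fix u' assume u': "stepA (Nrec \<rho> r s Zero) u'" "t' = fill E u'"
        from u'(1) show ?thesis
        proof (cases rule: stepA.cases)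
          case nrec0
          then show ?thesis using u' SNA.intros[OF 1(1)] by simp
        next
          case (cNrec1 r')
          then show ?thesis using IH_Er fill_step u' by blast
        next
          case (cNrec2 s')
          then show ?thesis using IH_s SNA.intros[OF 1(1)] u' by blast
        next
          case (cNrec3 z)
          then show ?thesis using num_normal[of 0] by simp
        qed
      next
        fix E' assume "t' = fill E' (Nrec \<rho> r s Zero)" "ctx_step E E'"
        then show ?thesis using IH_Er[of E' r] by (simp add: ctx_step_def)
      qed
    qed
  qed
qed

text \<open>Part (2): induction along the transitive reduction of the contractum
  E[s n (nrec r s n)], which simulates every reduction step of the redex
  E[nrec r s (S n)] other than the head step.\<close>
lemma SNA_nrec_succ:
  assumes "SNA (fill E (App (App s (num n)) (Nrec \<rho> r s (num n))))"
  shows "SNA (fill E (Nrec \<rho> r s (Succ (num n))))"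
  using assms
proof (induction "fill E (App (App s (num n)) (Nrec \<rho> r s (num n)))"
    arbitrary: E r s rule: SNA_tranclp_induct)
  case step
  note IH = step(2)
  let ?contr = "\<lambda>E r s1 s2. fill E (App (App s1 (num n)) (Nrec \<rho> r s2 (num n)))"
  show ?case
  proof (rule SNA.intros)
    fix t' assume "stepA (fill E (Nrec \<rho> r s (Succ (num n)))) t'"
    from fill_inert_step[OF inert_Nrec this] show "SNA t'"
    proof (elim disjE exE conjE)
      fix u' assume u': "stepA (Nrec \<rho> r s (Succ (num n))) u'" "t' = fill E u'"
      from u'(1) show ?thesis
      proof (cases rule: stepA.cases)
        case (nrecS m)
        then show ?thesis using num_inj u' step(1) by simp
      next
        case (cNrec1 r')
        have "stepA (?contr E r s s) (?contr E r' s s)"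
          using cNrec1 by (auto intro!: fill_step intro: stepA_stepAC.intros)
        then show ?thesis using IH u' cNrec1 by blast
      next
        case (cNrec2 s')
        have "stepA (?contr E r s s) (?contr E r s' s)"
          and "stepA (?contr E r s' s) (?contr E r s' s')"
          using cNrec2 by (auto intro!: fill_step intro: stepA_stepAC.intros)
        then have "stepA\<^sup>+\<^sup>+ (?contr E r s s) (?contr E r s' s')" by auto
        then show ?thesis using IH u' cNrec2 by blast
      next
        case (cNrec3 z)
        then show ?thesis using num_normal[of "Suc n"] by simp
      qed
    next
      fix E' assume E': "t' = fill E' (Nrec \<rho> r s (Succ (num n)))" "ctx_step E E'"
      then have "stepA (?contr E r s s) (?contr E' r s s)" by (simp add: ctx_step_def)
      then show ?thesis using IH E'(1) by blast
    qed
  qed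
qed

theorem mainTheorem19:
  fixes E :: ctx and r s :: trm and n :: nat and \<rho> :: ty
  shows "(SNA (fill E r) \<and> SNA s \<longrightarrow> SNA (fill E (Nrec \<rho> r s Zero)))
       \<and> (SNA (fill E (App (App s (num n)) (Nrec \<rho> r s (num n))))
            \<longrightarrow> SNA (fill E (Nrec \<rho> r s (Succ (num n)))))"
  using SNA_nrec_zero SNA_nrec_succ by blast

end
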